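(* Consider the system $x[k+1]=Ax[k]+\sigma[k]Bu[k]+(1-\sigma[k])d[k]+w[k]$, $y[k]=x[k]+v[k]$ and the controller $x_K[k+1]=A_Kx_K[k]+B_Ky[k]$, $u[k]=C_Kx_K[k]+D_Ky[k]$, for which $A_{CL}$ is a Schur matrix and for which $\Omega_I$ satisfies I1)-I3) and $\Omega_O$ satisfies O1)-O4). If the system's initialization satisfies $x[k_0]\in\mathcal{S}_c$, then applying the control procedure (Algorithm 1) described in the context ensures that: a) $x[k]\in\mathcal{X}$ and $u[k]\in\mathcal{U}$, for all $k\geq k_0$; b) There exists $T_{\mathrm{max}}\in\mathbb{N}_{>0}$ which satisfies: $\sigma[k_0]=1\Rightarrow\exists\, T_0\in\mathbb{N}_{[1,T_{\mathrm{max}}]}$ s.t. $\sigma[k_0+T_0]=0$; and $k>k_0,\,\sigma[k]=1,\,\sigma[k-1]=0\Rightarrow\exists\, T\in\mathbb{N}_{[1,T_{\mathrm{max}}]}$ s.t. $\sigma[k+T]=0$; c) $\sigma[k]=0\Rightarrow x[k]\in\mathcal{S}$, for all $k\geq k_0$.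
   Context: Plant: $x[k+1]=Ax[k]+\sigma[k]Bu[k]+(1-\sigma[k])d[k]+w[k]$, $y[k]=x[k]+v[k]$, with $x[k]\in\mathbb{R}^n$, $u[k]\in\mathbb{R}^m$, $d[k]\in\mathcal{D}$, $w[k]\in\mathcal{W}$, $v[k]\in\mathcal{V}$, and switching signal $\sigma[k]\in\{0,1\}$. Given sets $\mathcal{U}\subset\mathbb{R}^m$ and $\mathcal{S}\subset\mathcal{X}\subset\mathbb{R}^n$; all sets $\mathcal{D},\mathcal{W},\mathcal{V},\mathcal{U},\mathcal{S},\mathcal{X}$ are polytopes containing the zero vector in their interiors, and: there exist $\varepsilon_p,\varepsilon_m\in(0,1)$ with $\mathcal{V}\subseteq\varepsilon_p\mathcal{S}$ and $(-\mathcal{V})\subseteq\varepsilon_m\mathcal{S}$, where $(-\mathcal{V}):=\{-v:v\in\mathcal{V}\}$; there exists $\delta>0$ with $\{r\in\mathbb{R}^n:\|r\|\leq\delta\}\subseteq\mathcal{S}$; and $\mathcal{S}^+:=A\mathcal{S}\oplus\mathcal{W}\oplus\mathcal{D}\subseteq\mathcal{X}$ ($\oplus$ = Minkowski sum, $\ominus$ = Pontryagin difference). Define $\mathcal{S}_c:=\mathrm{conv}(\mathcal{S},\mathcal{S}^+)$. Controller with $n_K$-dimensional state $x_K$: $x_K[k+1]=A_Kx_K[k]+B_Ky[k]$, $u[k]=C_Kx_K[k]+D_Ky[k]$. With $\xi=[x^\top\ x_K^\top]^\top$, $z=[w^\top\ v^\top]^\top\in\mathcal{Z}:=\mathcal{W}\times\mathcal{V}$,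 the closed loop is $\xi[k+1]=A_{CL}\xi[k]+B_{CL}z[k]$, $u[k]=C_{CL}\xi[k]+D_{CL}z[k]$ with $A_{CL}=\begin{bmatrix}A+BD_K & BC_K\\ B_K & A_K\end{bmatrix}$, $B_{CL}=\begin{bmatrix}I_n & BD_K\\ O & B_K\end{bmatrix}$, $C_{CL}=[D_K\ C_K]$, $D_{CL}=[O\ D_K]$. Let $\mathcal{N}:=(-\mathcal{V})\oplus\mathcal{V}$. The sets $\Omega_I\subset\mathbb{R}^n$, $\Omega_O\subset\mathbb{R}^{n+n_K}$ are polyhedral, contain the origin, and satisfy: I1) $\Omega_I\subseteq\varepsilon_s\mathcal{S}$ for a given $\varepsilon_s\in(0,1)$; I2) there exists $\alpha>0$ with $\{r\in\mathbb{R}^n:\|r\|\leq\alpha\}\subseteq\Omega_I\ominus\mathcal{N}$; I3) there exists $\beta\in(0,1)$ with $\bigoplus_{i=0}^N[I_n\ O]A_{CL}^iB_{CL}\mathcal{Z}\subseteq\beta(\Omega_I\ominus\mathcal{N})$ for all $N\in\mathbb{N}$; O1) $\mathcal{S}_c\times\{0_{n_K}\}\subseteq\Omega_O$; O2) $A_{CL}\Omega_O\oplus B_{CL}\mathcal{Z}\subseteq\Omega_O$; O3) $[I_n\ O]\Omega_O\subseteq\mathcal{X}$; O4) $C_{CL}\Omega_O\oplus D_{CL}\mathcal{Z}\subseteq\mathcal{U}$. Algorithm 1: Initialization: read $y[k_0]$; if $y[k_0]\in\mathcal{S}\ominus(-\mathcal{V})$, set $\sigma[k_0]=0$, $u[k_0]=0_m$,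 $k\gets k_0+1$ and go to Monitoring; otherwise set $k\gets k_0$, $\sigma[k]=1$, $x_K[k]=0_{n_K}$ and go to Control. Monitoring: read $y[k]$; if $y[k]\in\mathcal{S}\ominus(-\mathcal{V})$: if $\sigma[k-1]=1$ and $y[k]\notin\Omega_I\ominus(-\mathcal{V})$, set $\sigma[k]=1$ and go to Control; else set $\sigma[k]=0$, $u[k]=0_m$, $k\gets k+1$ and go to Monitoring. If $y[k]\notin\mathcal{S}\ominus(-\mathcal{V})$: if $\sigma[k-1]=0$ set $x_K[k]=0_{n_K}$; then set $\sigma[k]=1$ and go to Control. Control: compute $x_K[k+1]$ and $u[k]$ via the controller equations, $k\gets k+1$, go to Monitoring. *)

theory Defs
  imports "HOL-Analysis.Analysis"
begin

definition msum :: "'a::ab_group_add set \<Rightarrow> 'a set \<Rightarrow> 'a set" (infixl "\<oplus>\<^sub>M" 65) where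
  "A \<oplus>\<^sub>M B = {a + b | a b. a \<in> A \<and> b \<in> B}"

definition pdiff :: "'a::ab_group_add set \<Rightarrow> 'a set \<Rightarrow> 'a set" (infixl "\<ominus>\<^sub>P" 65) where
  "A \<ominus>\<^sub>P B = {x. \<forall>b\<in>B. x + b \<in> A}"

definition sneg :: "'a::ab_group_add set \<Rightarrow> 'a set" where
  "sneg A = uminus ` A"

definition sscale :: "real \<Rightarrow> 'a::real_vector set \<Rightarrow> 'a set" where
  "sscale c A = (\<lambda>x. c *\<^sub>R x) ` A"

definition big_msum :: "nat \<Rightarrow> (nat \<Rightarrow> 'a::ab_group_add set) \<Rightarrow> 'a set" where
  "big_msum N F = {(\<Sum>i\<in>{0..N}. g i) | g. \<forall>i\<in>{0..N}. g i \<in> F i}"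

primrec matpow :: "real^'a^'a \<Rightarrow> nat \<Rightarrow> real^'a^'a" where
  "matpow M 0 = mat 1"
| "matpow M (Suc k) = M ** matpow M k"

definition schur :: "real^'a^'a \<Rightarrow> bool" where
  "schur M \<longleftrightarrow> (\<forall>(lam::complex) (v::complex^'a).
      v \<noteq> 0 \<and> (\<chi> i j. complex_of_real (M $ i $ j)) *v v = lam *s v \<longrightarrow> cmod lam < 1)"

definition block :: "real^'c1^'r1 \<Rightarrow> real^'c2^'r1 \<Rightarrow> real^'c1^'r2 \<Rightarrow> real^'c2^'r2
    \<Rightarrow> real^('c1 + 'c2)^('r1 + 'r2)" where
  "block P Q R S = (\<chi> i j. case i of
      Inl a \<Rightarrow> (case j of Inl b \<Rightarrow> P $ a $ b | Inr b \<Rightarrow> Q $ a $ b)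
    | Inr a \<Rightarrow> (case j of Inl b \<Rightarrow> R $ a $ b | Inr b \<Rightarrow> S $ a $ b))"

definition hblock :: "real^'c1^'r \<Rightarrow> real^'c2^'r \<Rightarrow> real^('c1 + 'c2)^'r" where
  "hblock P Q = (\<chi> i j. case j of Inl b \<Rightarrow> P $ i $ b | Inr b \<Rightarrow> Q $ i $ b)"

definition stack :: "real^'a \<Rightarrow> real^'b \<Rightarrow> real^('a + 'b)" where
  "stack a b = (\<chi> i. case i of Inl j \<Rightarrow> a $ j | Inr j \<Rightarrow> b $ j)"

definition top_part :: "real^('a::finite + 'b::finite) \<Rightarrow> real^'a" where
  "top_part z = (\<chi> i. z $ Inl i)"

definition bot_part :: "real^('a::finite + 'b::finite) \<Rightarrow> real^'b" where
  "bot_part z = (\<chi> i. z $ Inr i)"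

definition A_CL :: "real^'n^'n \<Rightarrow> real^'m^'n \<Rightarrow> real^'k^'k \<Rightarrow> real^'n^'k \<Rightarrow> real^'k^'m
    \<Rightarrow> real^'n^'m \<Rightarrow> real^('n + 'k)^('n + 'k)" where
  "A_CL A B AK BK CK DK = block (A + B ** DK) (B ** CK) BK AK"

definition B_CL :: "real^'m^'n \<Rightarrow> real^'n^'k \<Rightarrow> real^'n^'m \<Rightarrow> real^('n + 'n)^('n + 'k)" where
  "B_CL B BK DK = block (mat 1) (B ** DK) 0 BK"

definition C_CL :: "real^'k^'m \<Rightarrow> real^'n^'m \<Rightarrow> real^('n + 'k)^'m" where
  "C_CL CK DK = hblock DK CK"

definition D_CL :: "real^'n^'m \<Rightarrow> real^('n + 'n)^'m" where
  "D_CL DK = hblock 0 DK"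

definition Zset :: "(real^'n) set \<Rightarrow> (real^'n) set \<Rightarrow> (real^('n + 'n)) set" where
  "Zset W V = {stack w v | w v. w \<in> W \<and> v \<in> V}"

text \<open>The switching signal
  sig takes values in {0,1}; xK is the controller state (only meaningful in control mode);
  d, w, v are the disturbance and noise signals, y the measurement.\<close>
definition alg_run ::
  "real^'n^'n \<Rightarrow> real^'m^'n \<Rightarrow> real^'k^'k \<Rightarrow> real^'n^'k \<Rightarrow> real^'k^'m \<Rightarrow> real^'n^'m
   \<Rightarrow> (real^'n) set \<Rightarrow> (real^'n) set \<Rightarrow> (real^'n) set \<Rightarrow> (real^'n) set \<Rightarrow> (real^'n) set
   \<Rightarrow> nat \<Rightarrow> (nat \<Rightarrow> real^'n) \<Rightarrow> (nat \<Rightarrow> real^'m) \<Rightarrow> (nat \<Rightarrow> real^'k) \<Rightarrow> (nat \<Rightarrow> real)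
   \<Rightarrow> (nat \<Rightarrow> real^'n) \<Rightarrow> (nat \<Rightarrow> real^'n) \<Rightarrow> (nat \<Rightarrow> real^'n) \<Rightarrow> (nat \<Rightarrow> real^'n) \<Rightarrow> bool" where
  "alg_run A B AK BK CK DK D W V S OmI k0 x u xK sig d w v y \<longleftrightarrow>
     \<comment> \<open>plant, disturbances and noise\<close>
     (\<forall>k\<ge>k0. d k \<in> D \<and> w k \<in> W \<and> v k \<in> V \<and> y k = x k + v k \<and>
        x (Suc k) = A *v x k + sig k *\<^sub>R (B *v u k) + (1 - sig k) *\<^sub>R d k + w k) \<and>
     \<comment> \<open>initialization\<close>
     (if y k0 \<in> S \<ominus>\<^sub>P sneg V then sig k0 = 0 \<and> u k0 = 0
      else sig k0 = 1 \<and> xK k0 = 0) \<and>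
     \<comment> \<open>monitoring\<close>
     (\<forall>k>k0.
        if y k \<in> S \<ominus>\<^sub>P sneg V \<and> \<not> (sig (k - 1) = 1 \<and> y k \<notin> OmI \<ominus>\<^sub>P sneg V)
        then sig k = 0 \<and> u k = 0
        else sig k = 1 \<and> (sig (k - 1) = 0 \<longrightarrow> xK k = 0)) \<and>
     \<comment> \<open>control\<close>
     (\<forall>k\<ge>k0. sig k = 1 \<longrightarrow>
        xK (Suc k) = AK *v xK k + BK *v y k \<and> u k = CK *v xK k + DK *v y k)"

end

theory Submission
  imports Defs
begin

(* While the controller runs, the closed-loop state [x; x_K] stays in the invariant set Omega_O:
   every switch to control starts it at [x; 0] with x in S_c, which lies in Omega_O by O1, and O2
   keeps it there; O3 and O4 then give the state and input constraints, while in monitoring mode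
   the measurement test puts x in S and u = 0.
   After J uninterrupted control steps from [x; 0], the plant state is (A_CL^J)_11 x plus a noise
   term that I3 places in beta (Omega_I - N). Because W contains a ball, I3 also bounds the partial
   sums of (A_CL^i)_11 w_i for all small inputs w_i, which makes the entries of (A_CL^i)_11
   absolutely summable; so for large J the first term lies in (1 - beta) (Omega_I - N) uniformly on
   the bounded set S_c. By convexity the plant state
   is then in Omega_I - N, the measurement passes the Omega_I test, and monitoring resumes within
   J steps. *)

section \<open>Minkowski sums, Pontryagin differences and scalings\<close>

lemma msumI: "a \<in> A \<Longrightarrow> b \<in> B \<Longrightarrow> a + b \<in> A \<oplus>\<^sub>M B"
  by (auto simp: msum_def)

lemma pdiff_mono: "A \<subseteq> C \<Longrightarrow> A \<ominus>\<^sub>P N \<subseteq> C \<ominus>\<^sub>P N"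
  unfolding pdiff_def by blast

lemma pdiff_subset: "0 \<in> N \<Longrightarrow> C \<ominus>\<^sub>P N \<subseteq> C"
  unfolding pdiff_def by force

lemma convex_pdiff:
  assumes "convex C" shows "convex (C \<ominus>\<^sub>P N)"
  unfolding convex_def pdiff_def
proof (intro ballI allI impI, simp, intro ballI)
  fix x y b and s t :: real
  assume x: "\<forall>b\<in>N. x + b \<in> C" and y: "\<forall>b\<in>N. y + b \<in> C"
    and st: "0 \<le> s" "0 \<le> t" "s + t = 1" and b: "b \<in> N"
  have "s *\<^sub>R (x + b) + t *\<^sub>R (y + b) \<in> C" using assms x y b st by (simp add: convexD)
  moreover have "s *\<^sub>R (x + b) + t *\<^sub>R (y + b) = s *\<^sub>R x + t *\<^sub>R y + b"
    using st by (simp add: algebra_simps flip: scaleR_add_left)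
  ultimately show "s *\<^sub>R x + t *\<^sub>R y + b \<in> C" by simp
qed

lemma pdiff_sneg_add_memD: "x + v \<in> S \<ominus>\<^sub>P sneg V \<Longrightarrow> v \<in> V \<Longrightarrow> x \<in> S"
  unfolding pdiff_def sneg_def by force

lemma add_mem_pdiff_sneg:
  assumes "x \<in> C \<ominus>\<^sub>P (sneg V \<oplus>\<^sub>M V)" and "v \<in> V"
  shows "x + v \<in> C \<ominus>\<^sub>P sneg V"
  unfolding pdiff_def
proof (intro CollectI ballI)
  fix b assume "b \<in> sneg V"
  then have "b + v \<in> sneg V \<oplus>\<^sub>M V" using \<open>v \<in> V\<close> by (rule msumI)
  then have "x + (b + v) \<in> C" using assms(1) unfolding pdiff_def by blast
  then show "x + v + b \<in> C" by (simp add: algebra_simps)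
qed

lemma sscale_subset:
  assumes "convex S" "0 \<in> S" "0 \<le> e" "e \<le> 1"
  shows "sscale e S \<subseteq> S"
proof
  fix q assume "q \<in> sscale e S"
  then obtain s where s: "s \<in> S" "q = e *\<^sub>R s" by (auto simp: sscale_def)
  have "e *\<^sub>R s + (1 - e) *\<^sub>R 0 \<in> S"
    using convexD[OF assms(1) s(1) assms(2), of e "1 - e"] assms(3,4) by simp
  then show "q \<in> S" using s by simp
qed

lemma norm_le_of_mem_sscale:
  assumes "q \<in> sscale e S" "0 \<le> e" "e \<le> 1" "\<And>s. s \<in> S \<Longrightarrow> norm s \<le> K"
  shows "norm q \<le> K"
proof -
  obtain s where s: "s \<in> S" "q = e *\<^sub>R s" using assms(1) by (auto simp: sscale_def)
  have "norm q = e * norm s" using s assms(2) by simp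
  also have "\<dots> \<le> norm s" using assms(2,3) by (simp add: mult_left_le_one_le)
  finally show ?thesis using assms(4)[OF s(1)] by linarith
qed

lemma mem_sscale_if_norm_le:
  assumes "cball 0 r \<subseteq> S" "0 < e" "norm q \<le> e * r"
  shows "q \<in> sscale e S"
proof -
  have "norm (q /\<^sub>R e) \<le> r" using assms(2,3) by (simp add: field_simps)
  then have "q /\<^sub>R e \<in> S" using assms(1) by auto
  moreover have "q = e *\<^sub>R (q /\<^sub>R e)" using assms(2) by simp
  ultimately show ?thesis unfolding sscale_def by blast
qed

lemma convex_sscale_add:
  assumes "convex C" "0 \<le> b" "b \<le> 1" "p \<in> sscale (1 - b) C" "q \<in> sscale b C"
  shows "p + q \<in> C"
proof -
  obtain c1 where "c1 \<in> C" "p = (1 - b) *\<^sub>R c1" using assms(4) by (auto simp: sscale_def)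
  moreover obtain c2 where "c2 \<in> C" "q = b *\<^sub>R c2" using assms(5) by (auto simp: sscale_def)
  ultimately show ?thesis using convexD[OF assms(1), of c1 c2 "1 - b" b] assms(2,3) by simp
qed

lemma bounded_msum:
  fixes A B :: "'a::real_normed_vector set"
  assumes "bounded A" "bounded B"
  shows "bounded (A \<oplus>\<^sub>M B)"
proof -
  have "A \<oplus>\<^sub>M B = (\<lambda>(a, b). a + b) ` (A \<times> B)"
    by (auto simp: msum_def)
  then show ?thesis using bounded_plus[OF assms] by simp
qed

section \<open>Block vectors and the closed loop\<close>

lemma sum_UNIV_Plus:
  "(\<Sum>i\<in>(UNIV::('a::finite + 'b::finite) set). f i) = (\<Sum>i\<in>UNIV. f (Inl i)) + (\<Sum>i\<in>UNIV. f (Inr i))"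
  using sum.Plus[of "UNIV::'a set" "UNIV::'b set" f] by (simp add: comp_def)

lemma block_mult_stack:
  "block P Q R S *v stack a b = stack (P *v a + Q *v b) (R *v a + S *v b)"
  by (simp add: vec_eq_iff block_def stack_def matrix_vector_mult_def sum_UNIV_Plus split: sum.split)

lemma hblock_mult_stack: "hblock P Q *v stack a b = P *v a + Q *v b"
  by (simp add: vec_eq_iff hblock_def stack_def matrix_vector_mult_def sum_UNIV_Plus)

lemma top_part_stack [simp]: "top_part (stack a b) = a"
  by (simp add: vec_eq_iff top_part_def stack_def)

lemma stack_add: "stack a b + stack c d = stack (a + c) (b + d)"
  by (simp add: vec_eq_iff stack_def split: sum.split)

lemma top_part_add: "top_part (a + b) = top_part a + top_part b"
  by (simp add: vec_eq_iff top_part_def)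

lemma top_part_sum: "top_part (sum f I) = (\<Sum>i\<in>I. top_part (f i))"
  by (simp add: vec_eq_iff top_part_def sum_component)

definition upper_left :: "real^('c1::finite + 'c2::finite)^('r1::finite + 'r2::finite) \<Rightarrow> real^'c1^'r1" where
  "upper_left M = (\<chi> p l. M $ Inl p $ Inl l)"

lemma top_part_mult_stack_zero: "top_part (M *v stack x 0) = upper_left M *v x"
  by (simp add: vec_eq_iff upper_left_def top_part_def stack_def matrix_vector_mult_def sum_UNIV_Plus)

lemma B_CL_mult_stack_zero: "B_CL B BK DK *v stack w 0 = stack w 0"
  by (simp add: B_CL_def block_mult_stack matrix_vector_mul_lid)

lemma closed_loop_step:
  assumes "x' = A *v x + B *v u + w" "u = CK *v xK + DK *v (x + v)" "xK' = AK *v xK + BK *v (x + v)"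
  shows "stack x' xK' = A_CL A B AK BK CK DK *v stack x xK + B_CL B BK DK *v stack w v"
    and "u = C_CL CK DK *v stack x xK + D_CL DK *v stack w v"
proof -
  have "stack x' xK' = stack ((A + B ** DK) *v x + (B ** CK) *v xK + (mat 1 *v w + (B ** DK) *v v))
       (BK *v x + AK *v xK + (0 *v w + BK *v v))"
    using assms by (simp add: matrix_vector_mult_add_rdistrib matrix_vector_mul_assoc[symmetric]
        matrix_vector_right_distrib algebra_simps)
  then show "stack x' xK' = A_CL A B AK BK CK DK *v stack x xK + B_CL B BK DK *v stack w v"
    unfolding A_CL_def B_CL_def block_mult_stack stack_add by (simp add: algebra_simps)
  show "u = C_CL CK DK *v stack x xK + D_CL DK *v stack w v"
    using assms by (simp add: C_CL_def D_CL_def hblock_mult_stack matrix_vector_right_distrib algebra_simps)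
qed

lemma matpow_affine_recurrence:
  assumes "\<And>i. i < j \<Longrightarrow> \<xi> (Suc (k + i)) = M *v \<xi> (k + i) + b (k + i)"
  shows "\<xi> (k + j) = matpow M j *v \<xi> k + (\<Sum>i<j. matpow M i *v b (k + j - Suc i))"
  using assms
proof (induction j)
  case 0
  then show ?case by (simp add: matrix_vector_mul_lid)
next
  case (Suc j)
  have "\<xi> (k + Suc j) = M *v \<xi> (k + j) + b (k + j)"
    using Suc.prems[of j] by simp
  also have "\<dots> = matpow M (Suc j) *v \<xi> k + (\<Sum>i<j. matpow M (Suc i) *v b (k + j - Suc i)) + b (k + j)"
    using Suc by (simp add: matrix_vector_right_distrib vec.sum matrix_vector_mul_assoc)
  also have "\<dots> = matpow M (Suc j) *v \<xi> k + (\<Sum>i<Suc j. matpow M i *v b (k + Suc j - Suc i))"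
    by (subst sum.lessThan_Suc_shift) (simp add: matrix_vector_mul_lid algebra_simps)
  finally show ?case .
qed

section \<open>Decay of the plant block of the closed-loop powers\<close>

lemma onorm_tendsto_zero_if_bounded_sums:
  fixes Q :: "nat \<Rightarrow> real^'n^'m"
  assumes "0 < r"
    and bounded_sums: "\<And>N g. \<forall>i\<le>N. norm (g i) \<le> r \<Longrightarrow> norm (\<Sum>i\<le>N. Q i *v g i) \<le> K"
  shows "(\<lambda>i. onorm ((*v) (Q i))) \<longlonglongrightarrow> 0"
proof -
  have entries_summable: "summable (\<lambda>i. \<bar>Q i $ p $ l\<bar>)" for p l
  proof (rule summableI_nonneg_bounded[where x = "K / r"])
    fix N
    \<comment> \<open>these inputs make the \<open>p\<close>-th component of the sum \<open>r\<close> times a partial sum of the \<open>|Q i $ p $ l|\<close>\<close>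
    define g where "g i = (r * sgn (Q i $ p $ l)) *\<^sub>R axis l (1::real)" for i
    have "\<forall>i\<le>N. norm (g i) \<le> r"
      using \<open>0 < r\<close> by (simp add: g_def sgn_if norm_axis_1)
    then have "\<bar>(\<Sum>i\<le>N. Q i *v g i) $ p\<bar> \<le> K"
      using bounded_sums component_le_norm_cart order_trans by blast
    moreover have "(Q i *v g i) $ p = r * \<bar>Q i $ p $ l\<bar>" for i
      by (simp add: g_def matrix_vector_mult_def axis_def if_distrib abs_sgn cong: if_cong)
    then have "(\<Sum>i\<le>N. Q i *v g i) $ p = r * (\<Sum>i\<le>N. \<bar>Q i $ p $ l\<bar>)"
      by (simp add: sum_component sum_distrib_left)
    moreover have "r * (\<Sum>i<N. \<bar>Q i $ p $ l\<bar>) \<le> r * (\<Sum>i\<le>N. \<bar>Q i $ p $ l\<bar>)"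
      using \<open>0 < r\<close> by (intro mult_left_mono sum_mono2) auto
    ultimately have "r * (\<Sum>i<N. \<bar>Q i $ p $ l\<bar>) \<le> K"
      by (simp add: abs_le_iff)
    then show "(\<Sum>i<N. \<bar>Q i $ p $ l\<bar>) \<le> K / r"
      using \<open>0 < r\<close> by (simp add: pos_le_divide_eq mult.commute)
  qed simp
  have "summable (\<lambda>i. \<Sum>p\<in>UNIV. \<Sum>l\<in>UNIV. \<bar>Q i $ p $ l\<bar>)"
    by (intro summable_sum entries_summable)
  then have entry_sums_to_zero: "(\<lambda>i. \<Sum>p\<in>UNIV. \<Sum>l\<in>UNIV. \<bar>Q i $ p $ l\<bar>) \<longlonglongrightarrow> 0"
    by (rule summable_LIMSEQ_zero)
  show ?thesis
  proof (rule tendsto_sandwich[OF _ _ tendsto_const entry_sums_to_zero])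
    show "\<forall>\<^sub>F i in sequentially. 0 \<le> onorm ((*v) (Q i))"
      by (intro always_eventually allI onorm_pos_le matrix_vector_mul_bounded_linear)
    show "\<forall>\<^sub>F i in sequentially. onorm ((*v) (Q i)) \<le> (\<Sum>p\<in>UNIV. \<Sum>l\<in>UNIV. \<bar>Q i $ p $ l\<bar>)"
      by (intro always_eventually allI onorm_le_matrix_component_sum)
  qed
qed

lemma eventually_norm_mult_le_on_bounded:
  fixes Q :: "nat \<Rightarrow> real^'n^'m"
  assumes "(\<lambda>i. onorm ((*v) (Q i))) \<longlonglongrightarrow> 0" "bounded C" "0 < e"
  shows "\<forall>\<^sub>F i in sequentially. \<forall>q\<in>C. norm (Q i *v q) \<le> e"
proof -
  obtain R where R: "0 < R" "\<forall>q\<in>C. norm q \<le> R" using bounded_pos assms(2) by blast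
  have "\<forall>\<^sub>F i in sequentially. onorm ((*v) (Q i)) < e / R"
    using order_tendstoD(2)[OF assms(1)] R(1) assms(3) by simp
  then show ?thesis
  proof (rule eventually_mono, intro ballI)
    fix i q assume small: "onorm ((*v) (Q i)) < e / R" and "q \<in> C"
    have "norm (Q i *v q) \<le> onorm ((*v) (Q i)) * norm q"
      by (rule onorm[OF matrix_vector_mul_bounded_linear])
    also have "\<dots> \<le> e / R * R"
      using small R \<open>q \<in> C\<close> assms(3)
      by (intro mult_mono) (auto intro: onorm_pos_le matrix_vector_mul_bounded_linear)
    finally show "norm (Q i *v q) \<le> e" using R(1) by simp
  qed
qed

lemma upper_left_sums_bounded:
  fixes M :: "real^('n::finite + 'k::finite)^('n + 'k)"
  assumes "cball 0 r \<subseteq> W" "0 \<in> V"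
    and reach: "big_msum N (\<lambda>i. (\<lambda>z. top_part (matpow M i *v (B_CL B BK DK *v z))) ` Zset W V)
      \<subseteq> sscale \<beta> C"
    and "0 \<le> \<beta>" "\<beta> \<le> 1" "\<And>c. c \<in> C \<Longrightarrow> norm c \<le> K"
    and "\<forall>i\<le>N. norm (g i) \<le> r"
  shows "norm (\<Sum>i\<le>N. upper_left (matpow M i) *v g i) \<le> K"
proof -
  have "upper_left (matpow M i) *v g i
      \<in> (\<lambda>z. top_part (matpow M i *v (B_CL B BK DK *v z))) ` Zset W V" if "i \<le> N" for i
  proof (rule rev_image_eqI)
    show "stack (g i) 0 \<in> Zset W V"
      using assms(1,2,7) that unfolding Zset_def by (auto simp: subset_iff)
  qed (simp add: B_CL_mult_stack_zero top_part_mult_stack_zero)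
  then have "(\<Sum>i\<le>N. upper_left (matpow M i) *v g i) \<in> sscale \<beta> C"
    using reach unfolding big_msum_def atLeast0AtMost[symmetric] by fastforce
  then show ?thesis using assms(4-6) by (rule norm_le_of_mem_sscale)
qed

lemma exists_contracting_power:
  fixes M :: "real^('n::finite + 'k::finite)^('n + 'k)"
  assumes "(\<lambda>i. onorm ((*v) (upper_left (matpow M i)))) \<longlonglongrightarrow> 0"
    and "bounded C" "cball 0 \<alpha> \<subseteq> E" "0 < \<alpha>" "0 < e"
  shows "\<exists>J>0. \<forall>q\<in>C. top_part (matpow M J *v stack q 0) \<in> sscale e E"
proof -
  have "\<forall>\<^sub>F J in sequentially. J > 0 \<and> (\<forall>q\<in>C. norm (upper_left (matpow M J) *v q) \<le> e * \<alpha>)"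
    using eventually_gt_at_top eventually_norm_mult_le_on_bounded[OF assms(1,2)] assms(4,5)
    by (auto intro: eventually_conj)
  then obtain J where "J > 0" "\<forall>q\<in>C. norm (upper_left (matpow M J) *v q) \<le> e * \<alpha>"
    unfolding eventually_sequentially by blast
  then show ?thesis
    using mem_sscale_if_norm_le[OF assms(3,5)] by (auto simp: top_part_mult_stack_zero)
qed

lemma exists_control_horizon:
  fixes A :: "real^'n^'n" and B :: "real^'m^'n"
    and AK :: "real^'k^'k" and BK :: "real^'n^'k" and CK :: "real^'k^'m" and DK :: "real^'n^'m"
  assumes "0 < r" "cball 0 r \<subseteq> W" "0 \<in> V" "bounded S" "bounded W" "bounded D" "OmI \<subseteq> S"
    and "0 < \<alpha>" "cball 0 \<alpha> \<subseteq> OmI \<ominus>\<^sub>P (sneg V \<oplus>\<^sub>M V)" "0 \<le> \<beta>" "\<beta> < 1"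
    and reach: "\<And>N. big_msum N (\<lambda>i. (\<lambda>z. top_part (matpow (A_CL A B AK BK CK DK) i *v (B_CL B BK DK *v z)))
      ` Zset W V) \<subseteq> sscale \<beta> (OmI \<ominus>\<^sub>P (sneg V \<oplus>\<^sub>M V))"
  shows "\<exists>J>0. \<forall>q\<in>convex hull (S \<union> (((\<lambda>s. A *v s) ` S) \<oplus>\<^sub>M W \<oplus>\<^sub>M D)).
    top_part (matpow (A_CL A B AK BK CK DK) J *v stack q 0) \<in> sscale (1 - \<beta>) (OmI \<ominus>\<^sub>P (sneg V \<oplus>\<^sub>M V))"
proof -
  obtain K where "\<forall>s\<in>S. norm s \<le> K"
    using \<open>bounded S\<close> bounded_iff by blast
  moreover have "OmI \<ominus>\<^sub>P (sneg V \<oplus>\<^sub>M V) \<subseteq> OmI"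
    using \<open>0 \<in> V\<close> by (intro pdiff_subset) (force simp: msum_def sneg_def)
  ultimately have K: "\<And>c. c \<in> OmI \<ominus>\<^sub>P (sneg V \<oplus>\<^sub>M V) \<Longrightarrow> norm c \<le> K"
    using \<open>OmI \<subseteq> S\<close> by blast
  have "(\<lambda>i. onorm ((*v) (upper_left (matpow (A_CL A B AK BK CK DK) i)))) \<longlonglongrightarrow> 0"
  proof (rule onorm_tendsto_zero_if_bounded_sums[OF \<open>0 < r\<close>])
    fix N :: nat and g :: "nat \<Rightarrow> real^'n"
    assume "\<forall>i\<le>N. norm (g i) \<le> r"
    then show "norm (\<Sum>i\<le>N. upper_left (matpow (A_CL A B AK BK CK DK) i) *v g i) \<le> K"
      using upper_left_sums_bounded[OF assms(2,3) reach _ _ K] assms(10,11) by simp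
  qed
  moreover have "bounded (convex hull (S \<union> (((\<lambda>s. A *v s) ` S) \<oplus>\<^sub>M W \<oplus>\<^sub>M D)))"
  proof -
    have "bounded ((\<lambda>s. A *v s) ` S)"
      using bounded_linear_image[OF \<open>bounded S\<close> matrix_vector_mul_bounded_linear] .
    then have "bounded (((\<lambda>s. A *v s) ` S) \<oplus>\<^sub>M W \<oplus>\<^sub>M D)"
      using \<open>bounded W\<close> \<open>bounded D\<close> by (intro bounded_msum)
    then show ?thesis
      using \<open>bounded S\<close> by (intro bounded_convex_hull) (simp only: bounded_Un)
  qed
  ultimately show ?thesis
    using \<open>\<beta> < 1\<close> by (intro exists_contracting_power[OF _ _ assms(9,8)]) simp_all
qed

section \<open>Runs of Algorithm 1\<close>

locale algorithm1_run =
  fixes A :: "real^'n^'n" and B :: "real^'m^'n"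
    and AK :: "real^'k^'k" and BK :: "real^'n^'k" and CK :: "real^'k^'m" and DK :: "real^'n^'m"
    and D W V S OmI :: "(real^'n) set"
    and k0 :: nat and x :: "nat \<Rightarrow> real^'n" and u :: "nat \<Rightarrow> real^'m" and xK :: "nat \<Rightarrow> real^'k"
    and sig :: "nat \<Rightarrow> real" and d w v y :: "nat \<Rightarrow> real^'n"
  assumes run: "alg_run A B AK BK CK DK D W V S OmI k0 x u xK sig d w v y"
begin

abbreviation Sc :: "(real^'n) set" where
  "Sc \<equiv> convex hull (S \<union> (((\<lambda>s. A *v s) ` S) \<oplus>\<^sub>M W \<oplus>\<^sub>M D))"

abbreviation \<xi> :: "nat \<Rightarrow> real^('n + 'k)" where
  "\<xi> t \<equiv> stack (x t) (xK t)"

lemma plant: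
  "k0 \<le> k \<Longrightarrow> d k \<in> D \<and> w k \<in> W \<and> v k \<in> V \<and> y k = x k + v k \<and>
     x (Suc k) = A *v x k + sig k *\<^sub>R (B *v u k) + (1 - sig k) *\<^sub>R d k + w k"
  using run unfolding alg_run_def by blast

lemma initialization:
  "if y k0 \<in> S \<ominus>\<^sub>P sneg V then sig k0 = 0 \<and> u k0 = 0 else sig k0 = 1 \<and> xK k0 = 0"
  using run unfolding alg_run_def by blast

lemma monitoring:
  "k0 < k \<Longrightarrow> if y k \<in> S \<ominus>\<^sub>P sneg V \<and> \<not> (sig (k - 1) = 1 \<and> y k \<notin> OmI \<ominus>\<^sub>P sneg V)
     then sig k = 0 \<and> u k = 0 else sig k = 1 \<and> (sig (k - 1) = 0 \<longrightarrow> xK k = 0)"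
  using run unfolding alg_run_def by blast

lemma control:
  "k0 \<le> k \<Longrightarrow> sig k = 1 \<Longrightarrow> xK (Suc k) = AK *v xK k + BK *v y k \<and> u k = CK *v xK k + DK *v y k"
  using run unfolding alg_run_def by blast

lemma sig_cases: "k0 \<le> k \<Longrightarrow> sig k = 0 \<or> sig k = 1"
  using initialization monitoring[of k] by (cases "k = k0") (auto split: if_splits)

lemma monitoring_mode: "k0 \<le> k \<Longrightarrow> sig k = 0 \<Longrightarrow> x k \<in> S \<and> u k = 0"
  using initialization monitoring[of k] plant[of k] pdiff_sneg_add_memD[of "x k" "v k" S V]
  by (cases "k = k0") (auto split: if_splits)

lemma noise_mem_Zset: "k0 \<le> k \<Longrightarrow> stack (w k) (v k) \<in> Zset W V"
  using plant[of k] unfolding Zset_def by blast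

lemma closed_loop:
  assumes "k0 \<le> k" "sig k = 1"
  shows "\<xi> (Suc k) = A_CL A B AK BK CK DK *v \<xi> k + B_CL B BK DK *v stack (w k) (v k)"
    and "u k = C_CL CK DK *v \<xi> k + D_CL DK *v stack (w k) (v k)"
proof -
  have "x (Suc k) = A *v x k + B *v u k + w k"
    "u k = CK *v xK k + DK *v (x k + v k)" "xK (Suc k) = AK *v xK k + BK *v (x k + v k)"
    using plant[OF assms(1)] control[OF assms] assms(2) by simp_all
  then show "\<xi> (Suc k) = A_CL A B AK BK CK DK *v \<xi> k + B_CL B BK DK *v stack (w k) (v k)"
    and "u k = C_CL CK DK *v \<xi> k + D_CL DK *v stack (w k) (v k)"
    by (rule closed_loop_step)+
qed

lemma control_entry:
  assumes "x k0 \<in> Sc" "k0 \<le> k" "sig k = 1" "k = k0 \<or> sig (k - 1) = 0"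
  shows "x k \<in> Sc \<and> xK k = 0"
proof (cases "k = k0")
  case True
  then show ?thesis using assms(1,3) initialization by (auto split: if_splits)
next
  case False
  then have "k0 < k" "sig (k - 1) = 0" "k0 \<le> k - 1" "Suc (k - 1) = k" using assms(2,4) by auto
  then have "x k = A *v x (k - 1) + w (k - 1) + d (k - 1)" "x (k - 1) \<in> S"
      "w (k - 1) \<in> W" "d (k - 1) \<in> D"
    using plant[of "k - 1"] monitoring_mode[of "k - 1"] by (auto simp: algebra_simps)
  then have "x k \<in> ((\<lambda>s. A *v s) ` S) \<oplus>\<^sub>M W \<oplus>\<^sub>M D" by (auto intro!: msumI)
  moreover have "xK k = 0"
    using monitoring[OF \<open>k0 < k\<close>] assms(3) \<open>sig (k - 1) = 0\<close> by (auto split: if_splits)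
  ultimately show ?thesis by (blast intro: hull_inc)
qed

lemma control_state_mem_OmO:
  assumes O1: "(\<lambda>s. stack s 0) ` Sc \<subseteq> OmO"
    and O2: "((\<lambda>\<xi>. A_CL A B AK BK CK DK *v \<xi>) ` OmO) \<oplus>\<^sub>M ((\<lambda>z. B_CL B BK DK *v z) ` Zset W V) \<subseteq> OmO"
    and "x k0 \<in> Sc" "k0 \<le> k" "sig k = 1"
  shows "\<xi> k \<in> OmO"
  using assms(4,5)
proof (induction k rule: nat_induct_at_least)
  case base
  then show ?case using control_entry[OF \<open>x k0 \<in> Sc\<close> order_refl] O1 by auto
next
  case (Suc k)
  show ?case
  proof (cases "sig k = 1")
    case True
    then have "\<xi> (Suc k) \<in> ((\<lambda>\<xi>. A_CL A B AK BK CK DK *v \<xi>) ` OmO) \<oplus>\<^sub>M ((\<lambda>z. B_CL B BK DK *v z) ` Zset W V)"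
      unfolding closed_loop(1)[OF Suc.hyps True]
      using Suc.IH noise_mem_Zset[OF Suc.hyps] by (intro msumI imageI)
    then show ?thesis using O2 by blast
  next
    case False
    then have "sig (Suc k - 1) = 0" using sig_cases[OF Suc.hyps] by simp
    then show ?thesis
      using control_entry[OF \<open>x k0 \<in> Sc\<close> _ Suc.prems] Suc.hyps O1 by auto
  qed
qed

lemma constraints_satisfied:
  assumes O1: "(\<lambda>s. stack s 0) ` Sc \<subseteq> OmO"
    and O2: "((\<lambda>\<xi>. A_CL A B AK BK CK DK *v \<xi>) ` OmO) \<oplus>\<^sub>M ((\<lambda>z. B_CL B BK DK *v z) ` Zset W V) \<subseteq> OmO"
    and O3: "top_part ` OmO \<subseteq> X"
    and O4: "((\<lambda>\<xi>. C_CL CK DK *v \<xi>) ` OmO) \<oplus>\<^sub>M ((\<lambda>z. D_CL DK *v z) ` Zset W V) \<subseteq> U"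
    and "S \<subseteq> X" "0 \<in> U" "x k0 \<in> Sc" "k0 \<le> k"
  shows "x k \<in> X \<and> u k \<in> U"
proof (cases "sig k = 0")
  case True
  then show ?thesis using monitoring_mode[OF \<open>k0 \<le> k\<close>] assms(5,6) by auto
next
  case False
  then have "sig k = 1" using sig_cases[OF \<open>k0 \<le> k\<close>] by simp
  then have "\<xi> k \<in> OmO" using control_state_mem_OmO[OF O1 O2 \<open>x k0 \<in> Sc\<close> \<open>k0 \<le> k\<close>] by simp
  then have "top_part (\<xi> k) \<in> X" "C_CL CK DK *v \<xi> k + D_CL DK *v stack (w k) (v k) \<in> U"
    using O3 O4 noise_mem_Zset[OF \<open>k0 \<le> k\<close>] by (auto intro!: msumI)
  then show ?thesis using closed_loop(2)[OF \<open>k0 \<le> k\<close> \<open>sig k = 1\<close>] by simp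
qed

lemma state_after_control_phase:
  assumes "k0 \<le> k" "\<forall>i<j. sig (k + i) = 1"
  shows "\<xi> (k + j) = matpow (A_CL A B AK BK CK DK) j *v \<xi> k
    + (\<Sum>i<j. matpow (A_CL A B AK BK CK DK) i *v (B_CL B BK DK *v stack (w (k + j - Suc i)) (v (k + j - Suc i))))"
  by (rule matpow_affine_recurrence[where b = "\<lambda>t. B_CL B BK DK *v stack (w t) (v t)"])
    (use closed_loop(1) assms in simp)

lemma control_phase_ends:
  assumes "OmI \<subseteq> S" "convex OmI" "0 \<le> \<beta>" "\<beta> \<le> 1" "0 < J"
    and contraction: "\<forall>q\<in>Sc. top_part (matpow (A_CL A B AK BK CK DK) J *v stack q 0)
      \<in> sscale (1 - \<beta>) (OmI \<ominus>\<^sub>P (sneg V \<oplus>\<^sub>M V))"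
    and reach: "big_msum (J - 1) (\<lambda>i. (\<lambda>z. top_part (matpow (A_CL A B AK BK CK DK) i *v (B_CL B BK DK *v z)))
      ` Zset W V) \<subseteq> sscale \<beta> (OmI \<ominus>\<^sub>P (sneg V \<oplus>\<^sub>M V))"
    and "x k0 \<in> Sc" "k0 \<le> k" "sig k = 1" "k = k0 \<or> sig (k - 1) = 0"
  shows "\<exists>T\<in>{1..J}. sig (k + T) = 0"
proof (rule ccontr)
  assume "\<not> ?thesis"
  then have on: "sig (k + i) = 1" if "i \<le> J" for i
    using that sig_cases[of "k + i"] \<open>k0 \<le> k\<close> \<open>sig k = 1\<close> by (cases "i = 0") auto
  define e where "e i = top_part (matpow (A_CL A B AK BK CK DK) i
    *v (B_CL B BK DK *v stack (w (k + J - Suc i)) (v (k + J - Suc i))))" for i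
  have entry: "x k \<in> Sc" "xK k = 0"
    using control_entry assms(8-11) by auto
  then have "x (k + J) = top_part (matpow (A_CL A B AK BK CK DK) J *v stack (x k) 0) + (\<Sum>i<J. e i)"
    using arg_cong[OF state_after_control_phase[OF \<open>k0 \<le> k\<close>, of J], of top_part] on
    by (simp add: e_def top_part_add top_part_sum)
  moreover have "(\<Sum>i<J. e i) \<in> sscale \<beta> (OmI \<ominus>\<^sub>P (sneg V \<oplus>\<^sub>M V))"
  proof -
    have "{..<J} = {0..J - 1}" using \<open>0 < J\<close> by auto
    moreover have "e i \<in> (\<lambda>z. top_part (matpow (A_CL A B AK BK CK DK) i *v (B_CL B BK DK *v z))) ` Zset W V"
      if "i < J" for i
      unfolding e_def by (rule imageI, rule noise_mem_Zset) (use \<open>k0 \<le> k\<close> that in simp)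
    ultimately have "(\<Sum>i<J. e i) \<in> big_msum (J - 1)
      (\<lambda>i. (\<lambda>z. top_part (matpow (A_CL A B AK BK CK DK) i *v (B_CL B BK DK *v z))) ` Zset W V)"
      unfolding big_msum_def by (intro CollectI exI[of _ e]) auto
    then show ?thesis using reach by blast
  qed
  ultimately have "x (k + J) \<in> OmI \<ominus>\<^sub>P (sneg V \<oplus>\<^sub>M V)"
    using convex_sscale_add[OF convex_pdiff[OF \<open>convex OmI\<close>] assms(3,4)] contraction entry(1) by simp
  then have "y (k + J) \<in> OmI \<ominus>\<^sub>P sneg V"
    using plant[of "k + J"] \<open>k0 \<le> k\<close> add_mem_pdiff_sneg by auto
  moreover have "sig (k + J - 1) = 1" using on[of "J - 1"] \<open>0 < J\<close> by simp
  ultimately have "sig (k + J) = 0"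
    using monitoring[of "k + J"] pdiff_mono[OF \<open>OmI \<subseteq> S\<close>] \<open>k0 \<le> k\<close> \<open>0 < J\<close>
    by (auto split: if_splits)
  then show False using on[of J] by simp
qed

lemma guarantees:
  assumes "x k0 \<in> Sc"
    and O1: "(\<lambda>s. stack s 0) ` Sc \<subseteq> OmO"
    and O2: "((\<lambda>\<xi>. A_CL A B AK BK CK DK *v \<xi>) ` OmO) \<oplus>\<^sub>M ((\<lambda>z. B_CL B BK DK *v z) ` Zset W V) \<subseteq> OmO"
    and O3: "top_part ` OmO \<subseteq> X"
    and O4: "((\<lambda>\<xi>. C_CL CK DK *v \<xi>) ` OmO) \<oplus>\<^sub>M ((\<lambda>z. D_CL DK *v z) ` Zset W V) \<subseteq> U"
    and "S \<subseteq> X" "0 \<in> U" "OmI \<subseteq> S" "convex OmI" "0 \<le> \<beta>" "\<beta> \<le> 1" "0 < J"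
    and contraction: "\<forall>q\<in>Sc. top_part (matpow (A_CL A B AK BK CK DK) J *v stack q 0)
      \<in> sscale (1 - \<beta>) (OmI \<ominus>\<^sub>P (sneg V \<oplus>\<^sub>M V))"
    and reach: "\<And>N. big_msum N (\<lambda>i. (\<lambda>z. top_part (matpow (A_CL A B AK BK CK DK) i *v (B_CL B BK DK *v z)))
      ` Zset W V) \<subseteq> sscale \<beta> (OmI \<ominus>\<^sub>P (sneg V \<oplus>\<^sub>M V))"
  shows "(\<forall>k\<ge>k0. x k \<in> X \<and> u k \<in> U) \<and>
    (sig k0 = 1 \<longrightarrow> (\<exists>T0\<in>{1..J}. sig (k0 + T0) = 0)) \<and>
    (\<forall>k>k0. sig k = 1 \<and> sig (k - 1) = 0 \<longrightarrow> (\<exists>T\<in>{1..J}. sig (k + T) = 0)) \<and>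
    (\<forall>k\<ge>k0. sig k = 0 \<longrightarrow> x k \<in> S)"
proof -
  have exit: "\<exists>T\<in>{1..J}. sig (k + T) = 0" if "k0 \<le> k" "sig k = 1" "k = k0 \<or> sig (k - 1) = 0" for k
    using control_phase_ends[OF assms(8-12) contraction reach assms(1) that] .
  show ?thesis
    using constraints_satisfied[OF O1 O2 O3 O4 assms(6,7,1)] exit[OF order_refl] exit[OF less_imp_le]
      monitoring_mode by blast
qed

end

theorem theorem1:
  fixes A :: "real^'n^'n" and B :: "real^'m^'n"
    and AK :: "real^'k^'k" and BK :: "real^'n^'k" and CK :: "real^'k^'m" and DK :: "real^'n^'m"
    and D W V S X :: "(real^'n) set" and U :: "(real^'m) set"
    and OmI :: "(real^'n) set" and OmO :: "(real^('n + 'k)) set"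
    and eps_s :: real
  assumes polyD: "polytope D" and D0: "0 \<in> interior D"
    and polyW: "polytope W" and W0: "0 \<in> interior W"
    and polyV: "polytope V" and V0: "0 \<in> interior V"
    and polyU: "polytope U" and U0: "0 \<in> interior U"
    and polyS: "polytope S" and S0: "0 \<in> interior S"
    and polyX: "polytope X" and X0: "0 \<in> interior X"
    and SX: "S \<subseteq> X"
    and eps_p: "\<exists>e. 0 < e \<and> e < 1 \<and> V \<subseteq> sscale e S"
    and eps_m: "\<exists>e. 0 < e \<and> e < 1 \<and> sneg V \<subseteq> sscale e S"
    and delta: "\<exists>\<delta>>0. cball 0 \<delta> \<subseteq> S"
    and Splus: "((\<lambda>s. A *v s) ` S) \<oplus>\<^sub>M W \<oplus>\<^sub>M D \<subseteq> X"
    and schur: "schur (A_CL A B AK BK CK DK)"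
    and polyI: "polyhedron OmI" and OmI0: "0 \<in> OmI"
    and polyO: "polyhedron OmO" and OmO0: "0 \<in> OmO"
    and eps_s: "0 < eps_s" "eps_s < 1"
    and I1: "OmI \<subseteq> sscale eps_s S"
    and I2: "\<exists>\<alpha>>0. cball 0 \<alpha> \<subseteq> OmI \<ominus>\<^sub>P (sneg V \<oplus>\<^sub>M V)"
    and I3: "\<exists>\<beta>. 0 < \<beta> \<and> \<beta> < 1 \<and> (\<forall>N.
               big_msum N (\<lambda>i. (\<lambda>z. top_part (matpow (A_CL A B AK BK CK DK) i *v (B_CL B BK DK *v z)))
                                 ` Zset W V)
               \<subseteq> sscale \<beta> (OmI \<ominus>\<^sub>P (sneg V \<oplus>\<^sub>M V)))"
    and O1: "(\<lambda>s. stack s 0) ` (convex hull (S \<union> (((\<lambda>s. A *v s) ` S) \<oplus>\<^sub>M W \<oplus>\<^sub>M D))) \<subseteq> OmO"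
    and O2: "((\<lambda>\<xi>. A_CL A B AK BK CK DK *v \<xi>) ` OmO) \<oplus>\<^sub>M ((\<lambda>z. B_CL B BK DK *v z) ` Zset W V) \<subseteq> OmO"
    and O3: "top_part ` OmO \<subseteq> X"
    and O4: "((\<lambda>\<xi>. C_CL CK DK *v \<xi>) ` OmO) \<oplus>\<^sub>M ((\<lambda>z. D_CL DK *v z) ` Zset W V) \<subseteq> U"
  shows "\<exists>Tmax::nat. Tmax > 0 \<and>
    (\<forall>k0 x u xK sig d w v y.
       x k0 \<in> convex hull (S \<union> (((\<lambda>s. A *v s) ` S) \<oplus>\<^sub>M W \<oplus>\<^sub>M D)) \<and>
       alg_run A B AK BK CK DK D W V S OmI k0 x u xK sig d w v y \<longrightarrow>
         (\<forall>k\<ge>k0. x k \<in> X \<and> u k \<in> U) \<and>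
         (sig k0 = 1 \<longrightarrow> (\<exists>T0\<in>{1..Tmax}. sig (k0 + T0) = 0)) \<and>
         (\<forall>k>k0. sig k = 1 \<and> sig (k - 1) = 0 \<longrightarrow> (\<exists>T\<in>{1..Tmax}. sig (k + T) = 0)) \<and>
         (\<forall>k\<ge>k0. sig k = 0 \<longrightarrow> x k \<in> S))"
proof -
  obtain \<beta> where \<beta>: "0 < \<beta>" "\<beta> < 1" and reach:
    "\<And>N. big_msum N (\<lambda>i. (\<lambda>z. top_part (matpow (A_CL A B AK BK CK DK) i *v (B_CL B BK DK *v z)))
      ` Zset W V) \<subseteq> sscale \<beta> (OmI \<ominus>\<^sub>P (sneg V \<oplus>\<^sub>M V))"
    using I3 by blast
  obtain \<alpha> where \<alpha>: "0 < \<alpha>" "cball 0 \<alpha> \<subseteq> OmI \<ominus>\<^sub>P (sneg V \<oplus>\<^sub>M V)" using I2 by blast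
  obtain r where r: "0 < r" "cball 0 r \<subseteq> W" using W0 mem_interior_cball by blast
  have "0 \<in> V" "0 \<in> S" "0 \<in> U" using V0 S0 U0 interior_subset by blast+
  have "OmI \<subseteq> S"
    using I1 sscale_subset[OF polytope_imp_convex[OF polyS] \<open>0 \<in> S\<close>, of eps_s] eps_s by simp
  then obtain J where "0 < J" and contraction:
    "\<forall>q\<in>convex hull (S \<union> (((\<lambda>s. A *v s) ` S) \<oplus>\<^sub>M W \<oplus>\<^sub>M D)).
      top_part (matpow (A_CL A B AK BK CK DK) J *v stack q 0) \<in> sscale (1 - \<beta>) (OmI \<ominus>\<^sub>P (sneg V \<oplus>\<^sub>M V))"
    using exists_control_horizon[OF r \<open>0 \<in> V\<close> polytope_imp_bounded[OF polyS]
        polytope_imp_bounded[OF polyW] polytope_imp_bounded[OF polyD] _ \<alpha> _ \<beta>(2) reach] \<beta>(1)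
    by auto
  show ?thesis
    using algorithm1_run.guarantees[OF algorithm1_run.intro _ O1 O2 O3 O4 SX \<open>0 \<in> U\<close> \<open>OmI \<subseteq> S\<close>
        polyhedron_imp_convex[OF polyI] _ _ \<open>0 < J\<close> contraction reach] \<beta> \<open>0 < J\<close>
    by (intro exI[of _ J]) auto
qed

end
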